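(* The space $\mathcal K=\bigcup_{d\ge 2}\mathcal O_d$ of all polynomial knots, equipped with the inductive limit topology, is homotopy equivalent to $S^2$.
   Context: A polynomial map is a map $\phi:\mathbb R\to\mathbb R^3$ whose three component functions are real polynomials. A polynomial knot is a polynomial map which is a smooth embedding, i.e. $\phi$ is injective and $\phi'(t)\neq 0$ for all $t$. For an integer $d\ge 2$, $\mathcal A_d$ denotes the set of polynomial maps $t\mapsto (f(t),g(t),h(t))$ with $\deg f\le d-2$, $\deg g\le d-1$, $\deg h\le d$ (the zero polynomial allowed). Writing $f=\sum_{i=0}^{d-2}a_it^i$, $g=\sum_{i=0}^{d-1}b_it^i$, $h=\sum_{i=0}^{d}c_it^i$, the bijection $\eta:\mathcal A_d\to\mathbb R^{3d}$, $(f,g,h)\mapsto(a_0,\dots,a_{d-2},b_0,\dots,b_{d-1},c_0,\dots,c_d)$ is declared a homeomorphism (Euclidean topology on $\mathbb R^{3d}$). $\mathcal O_d$ is the set of polynomial knots in $\mathcal A_d$, with the subspace topology. Every polynomial knot lies in some $\mathcal O_d$, and $\mathcal K=\bigcup_{d\ge2}\mathcal O_d$ is the set of all polynomial knots. The inductive limit topology on $\mathcal K$: a set $V\subseteq\mathcal K$ is open iff $V\cap\mathcal O_d$ is open in $\mathcal O_d$ for every $d\ge 2$. *)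

theory Defs
  imports "HOL-Analysis.Analysis" "HOL-Computational_Algebra.Polynomial"
begin

type_synonym polymap = "real poly \<times> real poly \<times> real poly"

definition pmap :: "polymap \<Rightarrow> real \<Rightarrow> real \<times> real \<times> real" where
  "pmap P t = (case P of (f, g, h) \<Rightarrow> (poly f t, poly g t, poly h t))"

definition poly_knot :: "polymap \<Rightarrow> bool" where
  "poly_knot P \<longleftrightarrow> (case P of (f, g, h) \<Rightarrow>
     inj (pmap P) \<and>
     (\<forall>t. (poly (pderiv f) t, poly (pderiv g) t, poly (pderiv h) t) \<noteq> (0, 0, 0)))"

definition A_set :: "nat \<Rightarrow> polymap set" where
  "A_set d = {(f, g, h). degree f \<le> d - 2 \<and> degree g \<le> d - 1 \<and> degree h \<le> d}"

text \<open>The coefficient map eta_d, landing in R^{3d}, realised as the functions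
  nat => real vanishing from index 3d on (with the product topology, this
  subspace is exactly Euclidean R^{3d}).\<close>
definition eta :: "nat \<Rightarrow> polymap \<Rightarrow> (nat \<Rightarrow> real)" where
  "eta d P = (case P of (f, g, h) \<Rightarrow>
     (\<lambda>i. if i < d - 1 then coeff f i
          else if i < 2 * d - 1 then coeff g (i - (d - 1))
          else if i < 3 * d then coeff h (i - (2 * d - 1))
          else 0))"

text \<open>Topology on A_d making eta_d a homeomorphism onto R^{3d}.\<close>
definition A_top :: "nat \<Rightarrow> polymap topology" where
  "A_top d = pullback_topology (A_set d) (eta d) euclidean"

definition O_set :: "nat \<Rightarrow> polymap set" where
  "O_set d = {P \<in> A_set d. poly_knot P}"

definition O_top :: "nat \<Rightarrow> polymap topology" where
  "O_top d = subtopology (A_top d) (O_set d)"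

definition K_set :: "polymap set" where
  "K_set = (\<Union>d\<in>{2..}. O_set d)"

definition K_top :: "polymap topology" where
  "K_top = topology (\<lambda>V. V \<subseteq> K_set \<and> (\<forall>d\<ge>2. openin (O_top d) (V \<inter> O_set d)))"

end

theory Submission
  imports Defs
begin

text \<open>A polynomial knot \<open>P\<close> has nonzero velocity \<open>v(P) = P'(0)\<close>, so \<open>P \<mapsto> v(P)/|v(P)|\<close> maps
  \<open>K\<close> to \<open>S\<^sup>2\<close>, with right inverse \<open>v \<mapsto> (t \<mapsto> t v)\<close>. For \<open>0 < s \<le> 1\<close> put
  \<open>H(s, P)(t) = s P(0) + (P(s t) - P(0)) / (s c)\<close> with \<open>c = s + (1 - s) |v(P)|\<close>: a reparametrised,
  rescaled and translated copy of \<open>P\<close>, hence a knot of no larger degree. \<open>H(1, -)\<close> is the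
  identity and \<open>H(0, P)\<close> is the linear knot \<open>t \<mapsto> t v(P)/|v(P)|\<close>. \<open>H\<close> is continuous on
  each \<open>[0,1] \<times> O\<^sub>d\<close>; since \<open>[0,1]\<close> is locally compact, \<open>[0,1] \<times> K\<close> carries the inductive
  limit topology of the \<open>[0,1] \<times> O\<^sub>d\<close>, so \<open>H\<close> is a homotopy on \<open>K\<close>.\<close>

lemma continuous_map_sgn:
  fixes f :: "'a \<Rightarrow> 'b::real_normed_vector"
  assumes "continuous_map X euclidean f" "\<And>x. x \<in> topspace X \<Longrightarrow> f x \<noteq> 0"
  shows "continuous_map X euclidean (\<lambda>x. sgn (f x))"
  using assms unfolding continuous_map_atin sgn_div_norm by (auto intro!: tendsto_intros)

section \<open>The inductive limit topology on polynomial knots\<close>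

lemma istopology_K_top:
  "istopology (\<lambda>V. V \<subseteq> K_set \<and> (\<forall>d\<ge>2. openin (O_top d) (V \<inter> O_set d)))"
  unfolding istopology_def
proof (rule conjI; intro allI impI)
  fix S T assume "S \<subseteq> K_set \<and> (\<forall>d\<ge>2. openin (O_top d) (S \<inter> O_set d))"
    and "T \<subseteq> K_set \<and> (\<forall>d\<ge>2. openin (O_top d) (T \<inter> O_set d))"
  moreover have "S \<inter> T \<inter> O_set d = (S \<inter> O_set d) \<inter> (T \<inter> O_set d)" for d
    by blast
  ultimately show "S \<inter> T \<subseteq> K_set \<and> (\<forall>d\<ge>2. openin (O_top d) (S \<inter> T \<inter> O_set d))"
    by (auto intro: openin_Int)
next
  fix \<V> assume \<V>: "\<forall>V\<in>\<V>. V \<subseteq> K_set \<and> (\<forall>d\<ge>2. openin (O_top d) (V \<inter> O_set d))"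
  have "openin (O_top d) (\<Union>\<V> \<inter> O_set d)" if "d \<ge> 2" for d
    unfolding Int_Union2 using \<V> that by (intro openin_Union) auto
  then show "\<Union>\<V> \<subseteq> K_set \<and> (\<forall>d\<ge>2. openin (O_top d) (\<Union>\<V> \<inter> O_set d))"
    using \<V> by blast
qed

lemma openin_K_top:
  "openin K_top V \<longleftrightarrow> V \<subseteq> K_set \<and> (\<forall>d\<ge>2. openin (O_top d) (V \<inter> O_set d))"
  unfolding K_top_def using topology_inverse'[OF istopology_K_top] by simp

lemma O_set_subset_A_set: "O_set d \<subseteq> A_set d"
  unfolding O_set_def by auto

lemma O_set_subset_K_set: "d \<ge> 2 \<Longrightarrow> O_set d \<subseteq> K_set"
  unfolding K_set_def by auto

lemma poly_knot_if_in_K_set: "P \<in> K_set \<Longrightarrow> poly_knot P"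
  unfolding K_set_def O_set_def by auto

lemma A_set_mono: "d \<le> e \<Longrightarrow> A_set d \<subseteq> A_set e"
  unfolding A_set_def by auto

lemma O_set_mono: "d \<le> e \<Longrightarrow> O_set d \<subseteq> O_set e"
  unfolding O_set_def using A_set_mono by auto

lemma topspace_A_top [simp]: "topspace (A_top d) = A_set d"
  unfolding A_top_def topspace_pullback_topology by auto

lemma topspace_O_top [simp]: "topspace (O_top d) = O_set d"
  unfolding O_top_def using O_set_subset_A_set by auto

lemma topspace_K_top [simp]: "topspace K_top = K_set"
proof -
  have "openin K_top K_set"
    unfolding openin_K_top using O_set_subset_K_set by (metis Int_absorb1 openin_topspace order_refl topspace_O_top)
  then show ?thesis
    by (metis openin_K_top openin_subset openin_topspace subset_antisym)
qed

lemma eta_apply: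
  "eta d P j = (if j < d - 1 then coeff (fst P) j
     else if j < 2 * d - 1 then coeff (fst (snd P)) (j - (d - 1))
     else if j < 3 * d then coeff (snd (snd P)) (j - (2 * d - 1))
     else 0)"
  unfolding eta_def by (cases P) auto

lemma coeff_fst_eq_eta:
  "d \<ge> 2 \<Longrightarrow> P \<in> A_set d \<Longrightarrow> coeff (fst P) i = (if i < d - 1 then eta d P i else 0)"
  unfolding A_set_def eta_apply by (auto intro!: coeff_eq_0)

lemma coeff_fst_snd_eq_eta:
  "d \<ge> 2 \<Longrightarrow> P \<in> A_set d \<Longrightarrow>
     coeff (fst (snd P)) i = (if i < d then eta d P (i + (d - 1)) else 0)"
  unfolding A_set_def eta_apply by (auto intro!: coeff_eq_0)

lemma coeff_snd_snd_eq_eta: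
  "d \<ge> 2 \<Longrightarrow> P \<in> A_set d \<Longrightarrow>
     coeff (snd (snd P)) i = (if i < d + 1 then eta d P (i + (2 * d - 1)) else 0)"
  unfolding A_set_def eta_apply by (auto intro!: coeff_eq_0)

lemma continuous_map_A_top_coeff:
  assumes "d \<ge> 2"
  shows "continuous_map (A_top d) euclideanreal (\<lambda>P. coeff (fst P) i)"
    and "continuous_map (A_top d) euclideanreal (\<lambda>P. coeff (fst (snd P)) i)"
    and "continuous_map (A_top d) euclideanreal (\<lambda>P. coeff (snd (snd P)) i)"
proof -
  have entry: "continuous_map (A_top d) euclideanreal (\<lambda>P. if b then eta d P j else 0)" for b j
  proof -
    have "continuous_map euclidean euclideanreal (\<lambda>y::nat \<Rightarrow> real. if b then y j else 0)"
      by (simp add: continuous_map_iff_continuous)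
    from continuous_map_pullback[OF this, of "A_set d" "eta d"] show ?thesis
      unfolding A_top_def o_def .
  qed
  show "continuous_map (A_top d) euclideanreal (\<lambda>P. coeff (fst P) i)"
    by (rule continuous_map_eq[OF entry[of "i < d - 1" i]]) (use assms in \<open>simp add: coeff_fst_eq_eta\<close>)
  show "continuous_map (A_top d) euclideanreal (\<lambda>P. coeff (fst (snd P)) i)"
    by (rule continuous_map_eq[OF entry[of "i < d" "i + (d - 1)"]])
      (use assms in \<open>simp add: coeff_fst_snd_eq_eta\<close>)
  show "continuous_map (A_top d) euclideanreal (\<lambda>P. coeff (snd (snd P)) i)"
    by (rule continuous_map_eq[OF entry[of "i < d + 1" "i + (2 * d - 1)"]])
      (use assms in \<open>simp add: coeff_snd_snd_eq_eta\<close>)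
qed

lemma continuous_map_O_top_coeff:
  assumes "d \<ge> 2"
  shows "continuous_map (O_top d) euclideanreal (\<lambda>P. coeff (fst P) i)"
    and "continuous_map (O_top d) euclideanreal (\<lambda>P. coeff (fst (snd P)) i)"
    and "continuous_map (O_top d) euclideanreal (\<lambda>P. coeff (snd (snd P)) i)"
  using continuous_map_A_top_coeff[OF assms] unfolding O_top_def
  by (auto intro: continuous_map_from_subtopology)

lemma continuous_map_into_A_top:
  assumes "k \<in> topspace X \<rightarrow> A_set d"
    and "\<And>i. continuous_map X euclideanreal (\<lambda>x. coeff (fst (k x)) i)"
    and "\<And>i. continuous_map X euclideanreal (\<lambda>x. coeff (fst (snd (k x))) i)"
    and "\<And>i. continuous_map X euclideanreal (\<lambda>x. coeff (snd (snd (k x))) i)"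
  shows "continuous_map X (A_top d) k"
  unfolding A_top_def
proof (rule continuous_map_pullback')
  show "topspace X \<subseteq> k -` A_set d"
    using assms(1) by auto
  have "continuous_map X euclideanreal (\<lambda>x. eta d (k x) j)" for j
    using assms(2-4)
    by (cases "j < d - 1"; cases "j < 2 * d - 1"; cases "j < 3 * d") (simp_all add: eta_apply)
  then have "continuous_map X (product_topology (\<lambda>i. euclideanreal) UNIV) (\<lambda>x. eta d (k x))"
    by (simp add: continuous_map_componentwise_UNIV)
  then show "continuous_map X euclidean (eta d \<circ> k)"
    by (simp add: euclidean_product_topology o_def)
qed

lemma continuous_map_into_O_top:
  assumes "k \<in> topspace X \<rightarrow> O_set d"
    and "\<And>i. continuous_map X euclideanreal (\<lambda>x. coeff (fst (k x)) i)"
    and "\<And>i. continuous_map X euclideanreal (\<lambda>x. coeff (fst (snd (k x))) i)"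
    and "\<And>i. continuous_map X euclideanreal (\<lambda>x. coeff (snd (snd (k x))) i)"
  shows "continuous_map X (O_top d) k"
  unfolding O_top_def continuous_map_in_subtopology
  using continuous_map_into_A_top[of k X d] assms O_set_subset_A_set by blast

lemma O_top_eq_subtopology:
  assumes "2 \<le> d" "d \<le> e"
  shows "O_top d = subtopology (O_top e) (O_set d)"
proof -
  have de: "O_set d \<subseteq> O_set e"
    using O_set_mono assms by auto
  have "continuous_map (O_top d) (O_top e) id"
    by (rule continuous_map_into_O_top) (use de continuous_map_O_top_coeff[of d] assms in auto)
  moreover have "continuous_map (subtopology (O_top e) (O_set d)) (O_top d) id"
    using continuous_map_into_O_top[of id "subtopology (O_top e) (O_set d)" d]
      continuous_map_O_top_coeff[of e] assms de
    by (auto intro: continuous_map_from_subtopology)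
  ultimately have "homeomorphic_maps (subtopology (O_top e) (O_set d)) (O_top d) id id"
    by (simp add: homeomorphic_maps_def continuous_map_in_subtopology)
  then show ?thesis
    unfolding homeomorphic_maps_id .
qed

lemma continuous_map_from_K_top:
  assumes "\<And>d. d \<ge> 2 \<Longrightarrow> continuous_map (O_top d) Y f"
  shows "continuous_map K_top Y f"
  unfolding continuous_map_def
proof (intro conjI allI impI)
  show "f \<in> topspace K_top \<rightarrow> topspace Y"
  proof
    fix x assume "x \<in> topspace K_top"
    then obtain d where "d \<ge> 2" "x \<in> O_set d"
      by (auto simp: K_set_def)
    then show "f x \<in> topspace Y"
      using continuous_map_image_subset_topspace[OF assms] by auto
  qed
  fix U assume U: "openin Y U"
  have "openin (O_top d) ({x \<in> K_set. f x \<in> U} \<inter> O_set d)" if "d \<ge> 2" for d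
  proof -
    have "{x \<in> K_set. f x \<in> U} \<inter> O_set d = {x \<in> topspace (O_top d). f x \<in> U}"
      using O_set_subset_K_set[OF that] by auto
    then show ?thesis
      using openin_continuous_map_preimage[OF assms[OF that] U] by simp
  qed
  then show "openin K_top {x \<in> topspace K_top. f x \<in> U}"
    unfolding openin_K_top by auto
qed

lemma continuous_map_O_top_K_top:
  assumes "d \<ge> 2"
  shows "continuous_map (O_top d) K_top id"
  unfolding continuous_map_def
proof (intro conjI allI impI)
  show "id \<in> topspace (O_top d) \<rightarrow> topspace K_top"
    using O_set_subset_K_set[OF assms] by auto
  fix U assume "openin K_top U"
  then have "openin (O_top d) (U \<inter> O_set d)"
    using assms openin_K_top by auto
  moreover have "{x \<in> topspace (O_top d). id x \<in> U} = U \<inter> O_set d"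
    by auto
  ultimately show "openin (O_top d) {x \<in> topspace (O_top d). id x \<in> U}"
    by simp
qed

lemma tube_in_O_top:
  assumes W: "openin (prod_topology X (O_top e)) (W \<inter> (topspace X \<times> O_set e))"
    and C: "compactin X C" and S: "S \<subseteq> O_set e" "C \<times> S \<subseteq> W"
  shows "\<exists>U. openin (O_top e) U \<and> S \<subseteq> U \<and> C \<times> U \<subseteq> W"
proof -
  have "\<exists>V. openin (O_top e) V \<and> x \<in> V \<and> C \<times> V \<subseteq> W" if x: "x \<in> S" for x
  proof -
    have "x \<in> topspace (O_top e)"
      using S x by auto
    moreover have "C \<times> {x} \<subseteq> W \<inter> (topspace X \<times> O_set e)"
      using S x compactin_subset_topspace[OF C] by auto
    ultimately obtain U V where "openin (O_top e) V" "x \<in> V" "C \<subseteq> U" "U \<times> V \<subseteq> W \<inter> (topspace X \<times> O_set e)"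
      by (metis tube_lemma_left[OF W C])
    then show ?thesis
      by blast
  qed
  then obtain V where V: "\<And>x. x \<in> S \<Longrightarrow> openin (O_top e) (V x) \<and> x \<in> V x \<and> C \<times> V x \<subseteq> W"
    by metis
  have "openin (O_top e) (\<Union>(V ` S))"
    using V by (intro openin_Union) blast
  moreover have "S \<subseteq> \<Union>(V ` S)" "C \<times> \<Union>(V ` S) \<subseteq> W"
    using V by blast+
  ultimately show ?thesis
    by blast
qed

lemma openin_K_top_UN:
  assumes d0: "d0 \<ge> 2" and mono: "mono Us" and Us: "\<And>n. openin (O_top (d0 + n)) (Us n)"
  shows "openin K_top (\<Union>n. Us n)"
  unfolding openin_K_top
proof (intro conjI allI impI)
  show "(\<Union>n. Us n) \<subseteq> K_set"
  proof (rule UN_least)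
    fix n
    have "Us n \<subseteq> O_set (d0 + n)"
      using openin_subset[OF Us[of n]] by simp
    also have "\<dots> \<subseteq> K_set"
      using d0 by (intro O_set_subset_K_set) simp
    finally show "Us n \<subseteq> K_set" .
  qed
  fix d :: nat assume d: "d \<ge> 2"
  have "Us n \<subseteq> Us (n + d)" for n
    by (rule monoD[OF mono]) simp
  then have eq: "(\<Union>n. Us n) \<inter> O_set d = (\<Union>n. Us (n + d) \<inter> O_set d)"
    by blast
  have "openin (O_top d) (Us (n + d) \<inter> O_set d)" for n
    using Us[of "n + d"] O_top_eq_subtopology[of d "d0 + (n + d)"] d
    by (auto simp: openin_subtopology)
  then show "openin (O_top d) ((\<Union>n. Us n) \<inter> O_set d)"
    unfolding eq by (intro openin_Union) blast
qed

lemma tube_in_K_top: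
  assumes W: "\<And>d. d \<ge> 2 \<Longrightarrow> openin (prod_topology X (O_top d)) (W \<inter> (topspace X \<times> O_set d))"
    and C: "compactin X C" and x0: "x0 \<in> K_set" "C \<times> {x0} \<subseteq> W"
  shows "\<exists>U. openin K_top U \<and> x0 \<in> U \<and> C \<times> U \<subseteq> W"
proof -
  obtain d0 where d0: "d0 \<ge> 2" "x0 \<in> O_set d0"
    using x0 unfolding K_set_def by auto
  define step where "step e S = (SOME U. openin (O_top e) U \<and> S \<subseteq> U \<and> C \<times> U \<subseteq> W)" for e S
  have step: "openin (O_top e) (step e S) \<and> S \<subseteq> step e S \<and> C \<times> step e S \<subseteq> W"
    if "e \<ge> 2" "S \<subseteq> O_set e" "C \<times> S \<subseteq> W" for e S
    unfolding step_def by (rule someI_ex, rule tube_in_O_top[OF W[OF that(1)] C that(2,3)])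
  define Us where "Us = rec_nat (step d0 {x0}) (\<lambda>n S. step (d0 + Suc n) S)"
  have Us_0: "Us 0 = step d0 {x0}" and Us_Suc: "Us (Suc n) = step (d0 + Suc n) (Us n)" for n
    unfolding Us_def by simp_all
  have Us: "openin (O_top (d0 + n)) (Us n) \<and> C \<times> Us n \<subseteq> W" for n
  proof (induction n)
    case 0
    show ?case
      using step[of d0 "{x0}"] d0 x0 by (simp add: Us_0)
  next
    case (Suc n)
    then have "Us n \<subseteq> O_set (d0 + Suc n)"
      using O_set_mono[of "d0 + n" "d0 + Suc n"] openin_subset by fastforce
    then show ?case
      using step[of "d0 + Suc n" "Us n"] d0 Suc by (simp add: Us_Suc)
  qed
  have "Us n \<subseteq> Us (Suc n)" for n
  proof -
    have "Us n \<subseteq> O_set (d0 + Suc n)"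
      using O_set_mono[of "d0 + n" "d0 + Suc n"] openin_subset[of _ "Us n"] Us[of n] by fastforce
    then show ?thesis
      using step[of "d0 + Suc n" "Us n"] Us[of n] d0 by (simp add: Us_Suc)
  qed
  then have "openin K_top (\<Union>n. Us n)"
    using openin_K_top_UN[OF d0(1)] Us by (simp add: mono_iff_le_Suc)
  moreover have "x0 \<in> Us 0"
    using step[of d0 "{x0}"] d0 x0 by (simp add: Us_0)
  moreover have "C \<times> (\<Union>n. Us n) \<subseteq> W"
    using Us by blast
  ultimately show ?thesis
    by blast
qed

lemma openin_prod_K_top:
  assumes X: "neighbourhood_base_of (compactin X) X"
    and W: "W \<subseteq> topspace X \<times> K_set"
    and W_levels: "\<And>d. d \<ge> 2 \<Longrightarrow> openin (prod_topology X (O_top d)) (W \<inter> (topspace X \<times> O_set d))"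
  shows "openin (prod_topology X K_top) W"
  unfolding openin_prod_topology_alt
proof (intro allI impI)
  fix s0 x0 assume sx: "(s0, x0) \<in> W"
  then obtain d0 where d0: "d0 \<ge> 2" "x0 \<in> O_set d0" and s0: "s0 \<in> topspace X"
    using W unfolding K_set_def by auto
  then have "(s0, x0) \<in> W \<inter> (topspace X \<times> O_set d0)"
    using sx by simp
  from W_levels[OF d0(1), unfolded openin_prod_topology_alt, rule_format, OF this]
  obtain J0 U0 where J0: "openin X J0" "s0 \<in> J0" "x0 \<in> U0" "J0 \<times> U0 \<subseteq> W \<inter> (topspace X \<times> O_set d0)"
    by blast
  from X[unfolded neighbourhood_base_of, rule_format, OF conjI[OF J0(1,2)]]
  obtain J C where J: "openin X J" "s0 \<in> J" "J \<subseteq> C" and C: "compactin X C" "C \<subseteq> J0"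
    by blast
  have "x0 \<in> K_set"
    using O_set_subset_K_set[OF d0(1)] d0(2) by blast
  moreover have "C \<times> {x0} \<subseteq> W"
    using C(2) J0(3,4) by blast
  ultimately obtain U where U: "openin K_top U" "x0 \<in> U" "C \<times> U \<subseteq> W"
    using tube_in_K_top[OF W_levels C(1)] by blast
  have "J \<times> U \<subseteq> W"
    using J(3) U(3) by blast
  then show "\<exists>U V. openin X U \<and> openin K_top V \<and> s0 \<in> U \<and> x0 \<in> V \<and> U \<times> V \<subseteq> W"
    using J(1,2) U(1,2) by blast
qed

lemma continuous_map_prod_K_top:
  assumes X: "neighbourhood_base_of (compactin X) X"
    and h: "\<And>d. d \<ge> 2 \<Longrightarrow> continuous_map (prod_topology X (O_top d)) (O_top d) h"
  shows "continuous_map (prod_topology X K_top) K_top h"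
  unfolding continuous_map_def
proof (intro conjI allI impI)
  have h_O: "h z \<in> O_set d" if "d \<ge> 2" "z \<in> topspace X \<times> O_set d" for d z
    using funcset_mem[OF continuous_map_funspace[OF h[OF that(1)]], of z] that(2) by simp
  show "h \<in> topspace (prod_topology X K_top) \<rightarrow> topspace K_top"
  proof
    fix z assume "z \<in> topspace (prod_topology X K_top)"
    then have "fst z \<in> topspace X" "snd z \<in> K_set"
      by (simp_all add: mem_Times_iff)
    then obtain d where "d \<ge> 2" "z \<in> topspace X \<times> O_set d"
      unfolding K_set_def by (auto simp: mem_Times_iff)
    then show "h z \<in> topspace K_top"
      using h_O[of d z] O_set_subset_K_set[of d] by auto
  qed
  fix V assume V: "openin K_top V"
  show "openin (prod_topology X K_top) {z \<in> topspace (prod_topology X K_top). h z \<in> V}"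
  proof (rule openin_prod_K_top[OF X])
    fix d :: nat assume d: "d \<ge> 2"
    have eq: "{z \<in> topspace (prod_topology X K_top). h z \<in> V} \<inter> (topspace X \<times> O_set d)
        = {z \<in> topspace (prod_topology X (O_top d)). h z \<in> V \<inter> O_set d}"
      unfolding topspace_prod_topology topspace_K_top topspace_O_top
      using O_set_subset_K_set[OF d] h_O[OF d] by blast
    have "openin (O_top d) (V \<inter> O_set d)"
      using V d by (simp add: openin_K_top)
    then show "openin (prod_topology X (O_top d))
        ({z \<in> topspace (prod_topology X K_top). h z \<in> V} \<inter> (topspace X \<times> O_set d))"
      unfolding eq by (rule openin_continuous_map_preimage[OF h[OF d]])
  qed auto
qed

lemma neighbourhood_base_of_compactin_top_of_set:
  fixes S :: "'a::metric_space set"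
  assumes "compact S"
  shows "neighbourhood_base_of (compactin (top_of_set S)) (top_of_set S)"
proof -
  have "locally_compact_space (top_of_set S)"
    using assms by (simp add: compact_imp_locally_compact_space compact_space_subtopology)
  moreover have "Hausdorff_space (top_of_set S)"
    by (intro Hausdorff_space_subtopology Hausdorff_space_euclidean)
  ultimately show ?thesis
    using locally_compact_space_neighbourhood_base[of "top_of_set S"] by simp
qed

section \<open>Rescaling polynomial knots\<close>

text \<open>For \<open>s \<noteq> 0\<close>, \<open>rescale s c p\<close> is \<open>t \<mapsto> s p(0) + (p(s t) - p(0)) / (s c)\<close>
  (see \<open>poly_rescale\<close>); the coefficientwise definition extends it continuously to \<open>s = 0\<close>.\<close>

definition rescale :: "real \<Rightarrow> real \<Rightarrow> real poly \<Rightarrow> real poly" where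
  "rescale s c p = Abs_poly (\<lambda>i. if i = 0 then s * coeff p 0 else coeff p i * s ^ (i - 1) / c)"

lemma coeff_rescale:
  "coeff (rescale s c p) i = (if i = 0 then s * coeff p 0 else coeff p i * s ^ (i - 1) / c)"
proof -
  have "coeff (rescale s c p) = (\<lambda>i. if i = 0 then s * coeff p 0 else coeff p i * s ^ (i - 1) / c)"
    unfolding rescale_def by (rule coeff_Abs_poly[where n = "degree p"]) (auto simp: coeff_eq_0)
  then show ?thesis
    by simp
qed

lemma degree_rescale_le: "degree (rescale s c p) \<le> degree p"
  by (rule degree_le) (auto simp: coeff_rescale coeff_eq_0)

lemma rescale_0: "rescale 0 c p = [:0, coeff p 1 / c:]"
  by (rule poly_eqI) (simp add: coeff_rescale coeff_pCons split: nat.split)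

lemma rescale_1_1: "rescale 1 1 p = p"
  by (rule poly_eqI) (simp add: coeff_rescale)

lemma pcompose_linear_eq_rescale:
  assumes "c \<noteq> 0"
  shows "pcompose p [:0, s:] = [:coeff p 0:] + smult (s * c) (rescale s c p - [:s * coeff p 0:])"
  by (rule poly_eqI) (use assms in \<open>simp add: coeff_pcompose_linear coeff_rescale coeff_pCons split: nat.split\<close>)

lemma poly_rescale:
  assumes "c \<noteq> 0"
  shows "poly p (s * t) = coeff p 0 + s * c * (poly (rescale s c p) t - s * coeff p 0)"
  using arg_cong[OF pcompose_linear_eq_rescale[OF assms, of p s], of "\<lambda>q. poly q t"]
  by (simp add: poly_pcompose mult.commute)

lemma pderiv_rescale: "pderiv (rescale s c p) = smult (1 / c) (pcompose (pderiv p) [:0, s:])"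
  by (rule poly_eqI) (simp add: coeff_pderiv coeff_rescale coeff_pcompose_linear)

lemma poly_pderiv_rescale: "poly (pderiv (rescale s c p)) t = poly (pderiv p) (s * t) / c"
  by (simp add: pderiv_rescale poly_pcompose mult.commute)

definition rescale_knot :: "real \<Rightarrow> real \<Rightarrow> polymap \<Rightarrow> polymap" where
  "rescale_knot s c = map_prod (rescale s c) (map_prod (rescale s c) (rescale s c))"

definition initial_velocity :: "polymap \<Rightarrow> real \<times> real \<times> real" where
  "initial_velocity P = (coeff (fst P) 1, coeff (fst (snd P)) 1, coeff (snd (snd P)) 1)"

definition linear_knot :: "real \<times> real \<times> real \<Rightarrow> polymap" where
  "linear_knot v = ([:0, fst v:], [:0, fst (snd v):], [:0, snd (snd v):])"

lemma pmap_linear_knot: "pmap (linear_knot v) t = t *\<^sub>R v"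
  by (cases v) (simp add: pmap_def linear_knot_def mult.commute)

lemma initial_velocity_linear_knot [simp]: "initial_velocity (linear_knot v) = v"
  by (simp add: initial_velocity_def linear_knot_def)

lemma poly_knot_linear_knot:
  assumes "v \<noteq> 0"
  shows "poly_knot (linear_knot v)"
proof -
  have "inj (pmap (linear_knot v))"
    using assms by (intro injI) (simp add: pmap_linear_knot)
  then show ?thesis
    using assms by (cases v) (auto simp: poly_knot_def linear_knot_def pderiv_pCons zero_prod_def)
qed

lemma linear_knot_in_O_set: "v \<noteq> 0 \<Longrightarrow> linear_knot v \<in> O_set 3"
  by (simp add: O_set_def A_set_def poly_knot_linear_knot) (simp add: linear_knot_def)

lemma initial_velocity_nonzero:
  assumes "poly_knot P"
  shows "initial_velocity P \<noteq> 0"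
proof -
  obtain f g h where P: "P = (f, g, h)"
    by (cases P)
  have "(poly (pderiv f) 0, poly (pderiv g) 0, poly (pderiv h) 0) \<noteq> (0, 0, 0)"
    using assms unfolding P poly_knot_def by auto
  then show ?thesis
    by (simp add: P initial_velocity_def poly_0_coeff_0 coeff_pderiv zero_prod_def)
qed

lemma rescale_knot_0: "rescale_knot 0 c P = linear_knot (initial_velocity P /\<^sub>R c)"
  by (simp add: rescale_knot_def linear_knot_def initial_velocity_def rescale_0 divide_inverse
      mult.commute map_prod_def split_beta)

lemma rescale_knot_1_1: "rescale_knot 1 1 P = P"
  by (simp add: rescale_knot_def rescale_1_1 map_prod_def split_beta)

lemma pmap_rescale_knot:
  assumes "c \<noteq> 0"
  shows "pmap P (s * t) = pmap P 0 + (s * c) *\<^sub>R (pmap (rescale_knot s c P) t - s *\<^sub>R pmap P 0)"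
  using assms by (cases P) (simp add: pmap_def rescale_knot_def poly_rescale poly_0_coeff_0)

lemma poly_knot_rescale_knot:
  assumes knot: "poly_knot P" and c: "c \<noteq> 0"
  shows "poly_knot (rescale_knot s c P)"
proof (cases "s = 0")
  case True
  then show ?thesis
    using initial_velocity_nonzero[OF knot] c by (simp add: rescale_knot_0 poly_knot_linear_knot)
next
  case False
  obtain f g h where P: "P = (f, g, h)"
    by (cases P)
  have "inj (pmap (rescale_knot s c P))"
  proof (rule injI)
    fix t1 t2 assume "pmap (rescale_knot s c P) t1 = pmap (rescale_knot s c P) t2"
    then have "pmap P (s * t1) = pmap P (s * t2)"
      by (simp add: pmap_rescale_knot[OF c])
    then have "s * t1 = s * t2"
      using knot by (simp add: poly_knot_def P inj_eq)
    then show "t1 = t2"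
      using False by simp
  qed
  moreover have "(poly (pderiv f) (s * t), poly (pderiv g) (s * t), poly (pderiv h) (s * t)) \<noteq> (0, 0, 0)" for t
    using knot by (simp add: poly_knot_def P)
  ultimately show ?thesis
    using c by (simp add: poly_knot_def P rescale_knot_def poly_pderiv_rescale)
qed

lemma rescale_knot_in_A_set: "P \<in> A_set d \<Longrightarrow> rescale_knot s c P \<in> A_set d"
  using degree_rescale_le[of s c] order_trans
  by (cases P) (fastforce simp: A_set_def rescale_knot_def)

section \<open>Deforming knots into lines\<close>

definition straighten :: "real \<times> polymap \<Rightarrow> polymap" where
  "straighten z = rescale_knot (fst z) (fst z + (1 - fst z) * norm (initial_velocity (snd z))) (snd z)"

lemma straighten_scale_pos:
  assumes "s \<in> {0..1}" "poly_knot P"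
  shows "s + (1 - s) * norm (initial_velocity P) > 0"
proof -
  have "norm (initial_velocity P) > 0"
    using initial_velocity_nonzero[OF assms(2)] by simp
  then show ?thesis
    using assms(1) by (cases "s = 0") (auto intro: add_pos_nonneg)
qed

lemma straighten_in_O_set:
  assumes "s \<in> {0..1}" "P \<in> O_set d"
  shows "straighten (s, P) \<in> O_set d"
proof -
  have P: "poly_knot P" "P \<in> A_set d"
    using assms(2) by (auto simp: O_set_def)
  then have "s + (1 - s) * norm (initial_velocity P) \<noteq> 0"
    using straighten_scale_pos[OF assms(1)] by (metis less_irrefl)
  then show ?thesis
    using P by (simp add: straighten_def O_set_def rescale_knot_in_A_set poly_knot_rescale_knot)
qed

lemma straighten_0: "straighten (0, P) = linear_knot (sgn (initial_velocity P))"
  by (simp add: straighten_def rescale_knot_0 sgn_div_norm)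

lemma straighten_1: "straighten (1, P) = P"
  by (simp add: straighten_def rescale_knot_1_1)

lemma continuous_map_O_top_initial_velocity:
  assumes "d \<ge> 2"
  shows "continuous_map (O_top d) euclidean initial_velocity"
proof -
  have "continuous_map (O_top d) (prod_topology euclidean (prod_topology euclidean euclidean))
          (\<lambda>P. (coeff (fst P) 1, coeff (fst (snd P)) 1, coeff (snd (snd P)) 1) :: real \<times> real \<times> real)"
    by (intro continuous_map_pairedI continuous_map_O_top_coeff assms)
  then show ?thesis
    by (simp add: initial_velocity_def[abs_def] prod_topology_euclidean)
qed

lemma continuous_map_straighten:
  assumes d: "d \<ge> 2"
  shows "continuous_map (prod_topology (top_of_set {0..1}) (O_top d)) (O_top d) straighten"
proof (rule continuous_map_into_O_top)
  let ?X = "prod_topology (top_of_set {0..1::real}) (O_top d)"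
  show "straighten \<in> topspace ?X \<rightarrow> O_set d"
    using straighten_in_O_set by auto
  have s: "continuous_map ?X euclideanreal fst"
    using continuous_map_fst[of "top_of_set {0..1::real}" "O_top d"]
    by (simp add: continuous_map_in_subtopology)
  have P: "continuous_map ?X euclideanreal (\<lambda>z. coeff (fst (snd z)) i)"
    "continuous_map ?X euclideanreal (\<lambda>z. coeff (fst (snd (snd z))) i)"
    "continuous_map ?X euclideanreal (\<lambda>z. coeff (snd (snd (snd z))) i)" for i
    using continuous_map_compose[OF continuous_map_snd continuous_map_O_top_coeff(1)[OF d]]
      continuous_map_compose[OF continuous_map_snd continuous_map_O_top_coeff(2)[OF d]]
      continuous_map_compose[OF continuous_map_snd continuous_map_O_top_coeff(3)[OF d]]
    by (simp_all add: o_def)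
  define c where "c z = fst z + (1 - fst z) * norm (initial_velocity (snd z))" for z
  have "continuous_map ?X euclidean (\<lambda>z. initial_velocity (snd z))"
    using continuous_map_compose[OF continuous_map_snd continuous_map_O_top_initial_velocity[OF d]]
    by (simp add: o_def)
  then have c_cont: "continuous_map ?X euclideanreal c"
    unfolding c_def by (intro continuous_intros s)
  have c_nonzero: "c z \<noteq> 0" if "z \<in> topspace ?X" for z
    using that straighten_scale_pos[of "fst z" "snd z"] by (auto simp: c_def O_set_def)
  have rescale_cont: "continuous_map ?X euclideanreal (\<lambda>z. coeff (rescale (fst z) (c z) (q z)) i)"
    if "\<And>i. continuous_map ?X euclideanreal (\<lambda>z. coeff (q z) i)" for q i
    unfolding coeff_rescale
    using that by (cases "i = 0") (auto intro!: continuous_intros s c_cont c_nonzero)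
  fix i
  show "continuous_map ?X euclideanreal (\<lambda>z. coeff (fst (straighten z)) i)"
    and "continuous_map ?X euclideanreal (\<lambda>z. coeff (fst (snd (straighten z))) i)"
    and "continuous_map ?X euclideanreal (\<lambda>z. coeff (snd (snd (straighten z))) i)"
    unfolding straighten_def rescale_knot_def c_def[symmetric]
    by (simp_all add: map_prod_def split_beta rescale_cont P)
qed

lemma continuous_map_K_top_sgn_initial_velocity:
  "continuous_map K_top (top_of_set (sphere 0 1)) (\<lambda>P. sgn (initial_velocity P))"
  unfolding continuous_map_in_subtopology
proof
  show "continuous_map K_top euclidean (\<lambda>P. sgn (initial_velocity P))"
    by (intro continuous_map_from_K_top continuous_map_sgn continuous_map_O_top_initial_velocity)
      (auto simp: O_set_def initial_velocity_nonzero)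
  show "(\<lambda>P. sgn (initial_velocity P)) \<in> topspace K_top \<rightarrow> sphere 0 1"
    by (auto simp: norm_sgn initial_velocity_nonzero poly_knot_if_in_K_set)
qed

lemma continuous_map_linear_knot_K_top:
  "continuous_map (top_of_set (sphere (0 :: real \<times> real \<times> real) 1)) K_top linear_knot"
proof -
  have "continuous_map (top_of_set (sphere (0 :: real \<times> real \<times> real) 1)) (O_top 3) linear_knot"
  proof (rule continuous_map_into_O_top)
    show "linear_knot \<in> topspace (top_of_set (sphere 0 1)) \<rightarrow> O_set 3"
      by (auto intro: linear_knot_in_O_set)
    fix i :: nat
    have lin: "coeff [:0, a:] i = (if i = 1 then a else 0)" for a :: real
      by (simp add: coeff_pCons split: nat.split)
    show "continuous_map (top_of_set (sphere 0 1)) euclideanreal (\<lambda>v. coeff (fst (linear_knot v)) i)"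
      and "continuous_map (top_of_set (sphere 0 1)) euclideanreal (\<lambda>v. coeff (fst (snd (linear_knot v))) i)"
      and "continuous_map (top_of_set (sphere 0 1)) euclideanreal (\<lambda>v. coeff (snd (snd (linear_knot v))) i)"
      by (cases "i = 1"; auto simp: linear_knot_def lin intro!: continuous_intros)+
  qed
  then show ?thesis
    using continuous_map_compose[OF _ continuous_map_O_top_K_top[of 3]] by simp
qed

lemma homotopic_linear_knot_sgn_initial_velocity_id:
  "homotopic_with (\<lambda>_. True) K_top K_top (\<lambda>P. linear_knot (sgn (initial_velocity P))) id"
  unfolding homotopic_with_def
proof (intro exI conjI allI ballI)
  show "continuous_map (prod_topology (top_of_set {0..1}) K_top) K_top straighten"
    by (intro continuous_map_prod_K_top continuous_map_straighten neighbourhood_base_of_compactin_top_of_set)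
      simp_all
qed (simp_all add: straighten_0 straighten_1)

theorem mainTheorem2:
  shows "K_top homotopy_equivalent_space
           top_of_set (sphere (0 :: real \<times> real \<times> real) 1)"
  unfolding homotopy_equivalent_space_def
proof (intro exI conjI)
  let ?F = "\<lambda>P. sgn (initial_velocity P)"
  show "continuous_map K_top (top_of_set (sphere 0 1)) ?F"
    by (rule continuous_map_K_top_sgn_initial_velocity)
  show "continuous_map (top_of_set (sphere 0 1)) K_top linear_knot"
    by (rule continuous_map_linear_knot_K_top)
  show "homotopic_with (\<lambda>_. True) K_top K_top (linear_knot \<circ> ?F) id"
    using homotopic_linear_knot_sgn_initial_velocity_id by (simp add: o_def)
  show "homotopic_with (\<lambda>_. True) (top_of_set (sphere 0 1)) (top_of_set (sphere 0 1)) (?F \<circ> linear_knot) id"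
  proof (rule homotopic_with_equal)
    show "continuous_map (top_of_set (sphere 0 1)) (top_of_set (sphere 0 1)) (?F \<circ> linear_knot)"
      using continuous_map_linear_knot_K_top continuous_map_K_top_sgn_initial_velocity
      by (rule continuous_map_compose)
  qed (auto simp: sgn_div_norm)
qed

end
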